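(* Let $B \subset \mathbb{Z}$ be a Bohr-zero non-periodic set. Then the set $D := \{xy - z^2 \,:\, x,y,z \in B\}$ satisfies $D = \mathbb{Z}$.
   Context: $\mathbb{T}^n=\mathbb{R}^n/\mathbb{Z}^n$. A set $B\subset \mathbb{Z}$ is a non-periodic Bohr set if there exist $n\ge 1$, a homomorphism $\tau:\mathbb{Z}\to\mathbb{T}^n$ with $\overline{\tau(\mathbb{Z})}=\mathbb{T}^n$, and an open set $U\subset\mathbb{T}^n$ with $B=\tau^{-1}(U)$; it is Bohr-zero if moreover $U$ contains the zero element of $\mathbb{T}^n$. *)

theory Defs
  imports Complex_Main
begin

text \<open>The torus T^n = R^n/Z^n is modelled through its universal cover. Points of R^n are
functions nat => real of which only the coordinates i < n matter. An open set U of T^n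
is represented by its preimage V under the quotient map R^n -> T^n: an open set of R^n
(for the coordinates i < n) which is invariant under translation by integer vectors.\<close>

definition torus_open :: "nat \<Rightarrow> (nat \<Rightarrow> real) set \<Rightarrow> bool" where
  "torus_open n V \<longleftrightarrow>
     (\<forall>x\<in>V. \<exists>e>0. \<forall>y. (\<forall>i<n. \<bar>y i - x i\<bar> < e) \<longrightarrow> y \<in> V) \<and>
     (\<forall>x m. (\<forall>i. m i \<in> \<int>) \<longrightarrow> (x \<in> V \<longleftrightarrow> (\<lambda>i. x i + m i) \<in> V))"

text \<open>Every homomorphism tau : Z -> T^n has the form tau k = k * alpha mod Z^n.
Its image is dense in T^n iff the set of points k*alpha + m (k in Z, m in Z^n)
is dense in R^n.\<close>

definition dense_orbit :: "nat \<Rightarrow> (nat \<Rightarrow> real) \<Rightarrow> bool" where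
  "dense_orbit n \<alpha> \<longleftrightarrow>
     (\<forall>x e. e > 0 \<longrightarrow>
        (\<exists>k::int. \<exists>m. (\<forall>i. m i \<in> \<int>) \<and>
            (\<forall>i<n. \<bar>of_int k * \<alpha> i + m i - x i\<bar> < e)))"

definition nonperiodic_bohr :: "int set \<Rightarrow> bool" where
  "nonperiodic_bohr B \<longleftrightarrow>
     (\<exists>n\<ge>1. \<exists>\<alpha> V. dense_orbit n \<alpha> \<and> torus_open n V \<and>
        B = {k. (\<lambda>i. of_int k * \<alpha> i) \<in> V})"

definition bohr_zero_nonperiodic :: "int set \<Rightarrow> bool" where
  "bohr_zero_nonperiodic B \<longleftrightarrow>
     (\<exists>n\<ge>1. \<exists>\<alpha> V. dense_orbit n \<alpha> \<and> torus_open n V \<and> (\<lambda>i. 0) \<in> V \<and>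
        B = {k. (\<lambda>i. of_int k * \<alpha> i) \<in> V})"

end

theory Submission
  imports Defs "HOL-Library.FuncSet"
begin

text \<open>Write B = {k. k\<alpha> \<in> U} with k\<alpha> read in the torus, \<alpha> of dense orbit and U a neighbourhood
of 0. The key fact is that (k\<alpha>, k^2\<alpha>) comes arbitrarily close to (0, \<theta>) for every \<theta>. A pigeonhole
argument on a sparse increasing sequence gives q \<noteq> 0 with q\<alpha> and q^2\<alpha> tiny; then k = s + tq with
s\<alpha> \<approx> \<gamma>/(2q) has k^2\<alpha> \<approx> s^2\<alpha> + t\<gamma>, and for \<gamma>_i = M^-(i+1) the base-M digits of t steer t\<gamma>
to \<theta> - s^2\<alpha>. Given N, pick a with a\<alpha> \<approx> 0 and a^2\<alpha> \<approx> -N\<alpha>, so that x = a^2 + N lies in B.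
If x = 0 then N = x\<cdot>x - a^2; otherwise pick d with d\<alpha> \<approx> 0 and d^2\<alpha> \<approx> -\<alpha>/x and put z = dx - a,
y = d^2x - 2ad + 1: then xy - z^2 = x - a^2 = N and y\<alpha> = x(d^2\<alpha> + \<alpha>/x) - 2a\<cdot>d\<alpha> \<approx> 0.\<close>

definition near_lattice :: "nat \<Rightarrow> (nat \<Rightarrow> real) \<Rightarrow> real \<Rightarrow> bool" where
  "near_lattice n v r \<longleftrightarrow> (\<exists>m::nat \<Rightarrow> int. \<forall>i<n. \<bar>v i - of_int (m i)\<bar> \<le> r)"

lemma near_lattice_iff_coordinates:
  "near_lattice n v r \<longleftrightarrow> (\<forall>i<n. \<exists>m::int. \<bar>v i - of_int m\<bar> \<le> r)"
  unfolding near_lattice_def by metis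

lemma near_lattice_Suc_iff:
  "near_lattice (Suc n) v r \<longleftrightarrow> near_lattice n v r \<and> (\<exists>m::int. \<bar>v n - of_int m\<bar> \<le> r)"
  unfolding near_lattice_iff_coordinates less_Suc_eq by blast

lemma near_lattice_add:
  assumes "near_lattice n v r" "near_lattice n w s"
  shows "near_lattice n (\<lambda>i. v i + w i) (r + s)"
proof -
  obtain m m' where "\<forall>i<n. \<bar>v i - of_int (m i)\<bar> \<le> r" "\<forall>i<n. \<bar>w i - of_int (m' i)\<bar> \<le> s"
    using assms unfolding near_lattice_def by blast
  then have "\<forall>i<n. \<bar>v i + w i - of_int (m i + m' i)\<bar> \<le> r + s"
    by (fastforce simp: abs_le_iff)
  then show ?thesis
    unfolding near_lattice_def by (rule exI[where x = "\<lambda>i. m i + m' i"])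
qed

lemma near_lattice_diff:
  assumes "near_lattice n v r" "near_lattice n w s"
  shows "near_lattice n (\<lambda>i. v i - w i) (r + s)"
proof -
  obtain m m' where "\<forall>i<n. \<bar>v i - of_int (m i)\<bar> \<le> r" "\<forall>i<n. \<bar>w i - of_int (m' i)\<bar> \<le> s"
    using assms unfolding near_lattice_def by blast
  then have "\<forall>i<n. \<bar>v i - w i - of_int (m i - m' i)\<bar> \<le> r + s"
    by (fastforce simp: abs_le_iff)
  then show ?thesis
    unfolding near_lattice_def by (rule exI[where x = "\<lambda>i. m i - m' i"])
qed

lemma near_lattice_scale:
  assumes "near_lattice n v r"
  shows "near_lattice n (\<lambda>i. of_int c * v i) (\<bar>of_int c\<bar> * r)"
proof -
  obtain m where m: "\<forall>i<n. \<bar>v i - of_int (m i)\<bar> \<le> r"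
    using assms unfolding near_lattice_def by blast
  have "\<bar>of_int c * v i - of_int (c * m i)\<bar> \<le> \<bar>of_int c\<bar> * r" if "i < n" for i
  proof -
    have "\<bar>of_int c * v i - of_int (c * m i)\<bar> = \<bar>of_int c * (v i - of_int (m i))\<bar>"
      by (simp add: right_diff_distrib)
    also have "\<dots> = \<bar>of_int c\<bar> * \<bar>v i - of_int (m i)\<bar>"
      by (rule abs_mult)
    also have "\<dots> \<le> \<bar>of_int c\<bar> * r"
      using m that by (simp add: mult_left_mono)
    finally show ?thesis .
  qed
  then show ?thesis
    unfolding near_lattice_def by (intro exI[where x = "\<lambda>i. c * m i"]) blast
qed

lemma near_lattice_mono: "near_lattice n v r \<Longrightarrow> r \<le> s \<Longrightarrow> near_lattice n v s"
  unfolding near_lattice_def by (meson order_trans)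

lemma near_lattice_cong:
  "near_lattice n v r \<Longrightarrow> (\<And>i. i < n \<Longrightarrow> w i = v i) \<Longrightarrow> near_lattice n w r"
  unfolding near_lattice_def by auto

lemma near_lattice_if_abs_le: "(\<And>i. i < n \<Longrightarrow> \<bar>v i\<bar> \<le> r) \<Longrightarrow> near_lattice n v r"
  unfolding near_lattice_def by (rule exI[of _ "\<lambda>_. 0"]) simp

lemma near_lattice_cong_Ints:
  assumes "near_lattice n v r" "\<And>i. i < n \<Longrightarrow> w i - v i \<in> \<int>"
  shows "near_lattice n w r"
  unfolding near_lattice_iff_coordinates
proof (intro allI impI)
  fix i assume "i < n"
  then obtain m :: int where "\<bar>v i - of_int m\<bar> \<le> r"
    using assms(1) unfolding near_lattice_iff_coordinates by blast
  moreover obtain k :: int where "w i - v i = of_int k"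
    using assms(2)[OF \<open>i < n\<close>] by (rule Ints_cases)
  ultimately have "\<bar>w i - of_int (m + k)\<bar> \<le> r"
    by (simp add: algebra_simps)
  then show "\<exists>m::int. \<bar>w i - of_int m\<bar> \<le> r" ..
qed

lemma near_lattice_pigeonhole:
  fixes x :: "nat \<Rightarrow> nat \<Rightarrow> real"
  assumes "c > 0"
  obtains j l where "j < l" "near_lattice n (\<lambda>i. x l i - x j i) c"
proof -
  define K :: nat where "K = nat \<lceil>1 / c\<rceil>"
  have "1 / c \<le> of_nat K"
    unfolding K_def by linarith
  moreover have "0 < 1 / c"
    using \<open>c > 0\<close> by simp
  ultimately have K_pos: "(0::real) < of_nat K"
    by linarith
  have K_c: "1 / of_nat K \<le> c"
    using \<open>1 / c \<le> of_nat K\<close> K_pos \<open>c > 0\<close> by (simp add: field_simps)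
  define cell where "cell j = restrict (\<lambda>i. \<lfloor>of_nat K * frac (x j i)\<rfloor>) {..<n}" for j
  have "\<lfloor>of_nat K * frac y\<rfloor> \<in> {0..int K}" for y :: real
  proof -
    have "0 \<le> of_nat K * frac y" "of_nat K * frac y \<le> of_nat K"
      using frac_ge_0[of y] frac_lt_1[of y] by (simp_all add: mult_left_le)
    then show ?thesis
      by (metis atLeastAtMost_iff floor_mono floor_of_nat zero_le_floor)
  qed
  then have "range cell \<subseteq> PiE {..<n} (\<lambda>_. {0..int K})"
    unfolding cell_def by (simp add: image_subset_iff PiE_iff)
  then have "finite (range cell)"
    by (rule finite_subset) (simp add: finite_PiE)
  then have "\<not> inj cell"
    using finite_imageD by blast
  then obtain j l where "j < l" and same_cell: "cell j = cell l"
    unfolding inj_def by (metis linorder_neqE_nat)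
  have "\<bar>x l i - x j i - of_int (\<lfloor>x l i\<rfloor> - \<lfloor>x j i\<rfloor>)\<bar> \<le> c" if "i < n" for i
  proof -
    have "\<lfloor>of_nat K * frac (x l i)\<rfloor> = \<lfloor>of_nat K * frac (x j i)\<rfloor>"
      using fun_cong[OF same_cell, of i] that unfolding cell_def by simp
    then have "\<bar>of_nat K * frac (x l i) - of_nat K * frac (x j i)\<bar> < 1"
      by linarith
    then have "of_nat K * \<bar>frac (x l i) - frac (x j i)\<bar> < 1"
      by (simp add: abs_mult right_diff_distrib[symmetric])
    then have "\<bar>frac (x l i) - frac (x j i)\<bar> < 1 / of_nat K"
      using K_pos by (simp add: field_simps)
    then show ?thesis
      using K_c by (simp add: frac_def)
  qed
  then have "near_lattice n (\<lambda>i. x l i - x j i) c"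
    unfolding near_lattice_def
    by (intro exI[where x = "\<lambda>i. \<lfloor>x l i\<rfloor> - \<lfloor>x j i\<rfloor>"]) blast
  with \<open>j < l\<close> show thesis
    by (rule that)
qed

lemma radix_fraction_approx:
  fixes \<tau> :: "nat \<Rightarrow> real"
  assumes "M \<ge> 1"
  shows "\<exists>t<M ^ n. near_lattice n (\<lambda>i. of_nat t / of_nat M ^ Suc i - \<tau> i) (1 / of_nat M)"
proof (induction n)
  case 0
  show ?case
    by (simp add: near_lattice_def)
next
  case (Suc n)
  then obtain t' where "t' < M ^ n"
    and approx: "near_lattice n (\<lambda>i. of_nat t' / of_nat M ^ Suc i - \<tau> i) (1 / of_nat M)"
    by blast
  have M_pos: "(0::real) < of_nat M"
    using \<open>M \<ge> 1\<close> by simp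
  define d where "d = nat \<lfloor>of_nat M * frac (\<tau> n)\<rfloor>"
  have d_floor: "of_nat d = real_of_int \<lfloor>of_nat M * frac (\<tau> n)\<rfloor>"
    unfolding d_def by (simp add: frac_ge_0)
  then have d_le: "of_nat d / of_nat M \<le> frac (\<tau> n)" and d_gt: "frac (\<tau> n) < of_nat d / of_nat M + 1 / of_nat M"
    using M_pos by (simp_all add: field_simps) linarith+
  then have "of_nat d / of_nat M < (1::real)"
    using frac_lt_1 by (metis order.strict_trans1)
  then have "d < M"
    using M_pos by (simp add: field_simps)
  define t where "t = t' + d * M ^ n"
  have "t < M ^ Suc n"
  proof -
    have "t < (d + 1) * M ^ n"
      unfolding t_def using \<open>t' < M ^ n\<close> by simp
    also have "\<dots> \<le> M * M ^ n"
      using \<open>d < M\<close> by (intro mult_right_mono) auto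
    finally show ?thesis
      by simp
  qed
  have "near_lattice n (\<lambda>i. of_nat t / of_nat M ^ Suc i - \<tau> i) (1 / of_nat M)"
  proof (rule near_lattice_cong_Ints[OF approx])
    fix i assume "i < n"
    then have "(of_nat t / of_nat M ^ Suc i - \<tau> i) - (of_nat t' / of_nat M ^ Suc i - \<tau> i)
        = of_nat (d * M ^ (n - Suc i))"
      using M_pos power_diff[of "of_nat M :: real" "Suc i" n]
      by (simp add: t_def add_divide_distrib)
    then show "(of_nat t / of_nat M ^ Suc i - \<tau> i) - (of_nat t' / of_nat M ^ Suc i - \<tau> i) \<in> \<int>"
      by simp
  qed
  moreover have "\<bar>of_nat t / of_nat M ^ Suc n - \<tau> n - of_int (- \<lfloor>\<tau> n\<rfloor>)\<bar> \<le> 1 / of_nat M"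
  proof -
    have "of_nat t / of_nat M ^ Suc n = of_nat t' / of_nat M ^ Suc n + of_nat d / (of_nat M :: real)"
      using M_pos by (simp add: t_def add_divide_distrib)
    moreover have "0 \<le> of_nat t' / (of_nat M :: real) ^ Suc n"
      by simp
    moreover have "of_nat t' / (of_nat M :: real) ^ Suc n < 1 / of_nat M"
      using \<open>t' < M ^ n\<close> M_pos by (simp add: field_simps flip: of_nat_power)
    ultimately show ?thesis
      using d_le d_gt unfolding frac_def abs_le_iff of_int_minus by linarith
  qed
  ultimately have "near_lattice (Suc n) (\<lambda>i. of_nat t / of_nat M ^ Suc i - \<tau> i) (1 / of_nat M)"
    by (auto simp: near_lattice_Suc_iff intro!: exI[of _ "- \<lfloor>\<tau> n\<rfloor>"])
  with \<open>t < M ^ Suc n\<close> show ?case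
    by auto
qed

lemma torus_open_zero_neighbourhood:
  assumes "torus_open n V" "(\<lambda>i. 0) \<in> V"
  obtains \<rho> where "\<rho> > 0" "\<And>v. near_lattice n v \<rho> \<Longrightarrow> v \<in> V"
proof -
  obtain e where "e > 0" and ball: "\<And>v. (\<forall>i<n. \<bar>v i\<bar> < e) \<Longrightarrow> v \<in> V"
    using assms unfolding torus_open_def by fastforce
  have shift: "\<And>x m. (\<forall>i. m i \<in> \<int>) \<Longrightarrow> x \<in> V \<longleftrightarrow> (\<lambda>i. x i + m i) \<in> V"
    using assms(1) unfolding torus_open_def by blast
  have "v \<in> V" if near: "near_lattice n v (e / 2)" for v
  proof -
    obtain m where "\<forall>i<n. \<bar>v i - of_int (m i)\<bar> \<le> e / 2"
      using near unfolding near_lattice_def by blast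
    then have "(\<lambda>i. v i - of_int (m i)) \<in> V"
      using ball \<open>e > 0\<close> by force
    then show ?thesis
      using shift[of "\<lambda>i. of_int (m i)" "\<lambda>i. v i - of_int (m i)"] by simp
  qed
  with \<open>e > 0\<close> show thesis
    by (intro that[of "e / 2"]) auto
qed

lemma dense_orbit_approx:
  assumes "dense_orbit n \<alpha>" "e > 0"
  obtains k :: int where "near_lattice n (\<lambda>i. of_int k * \<alpha> i - x i) e"
proof -
  obtain k m where m: "\<forall>i. m i \<in> \<int>" and close: "\<forall>i<n. \<bar>of_int k * \<alpha> i + m i - x i\<bar> < e"
    using assms unfolding dense_orbit_def by blast
  have floor_m: "of_int \<lfloor>m i\<rfloor> = m i" for i
    using m by (metis Ints_cases floor_of_int)
  have "\<forall>i<n. \<bar>of_int k * \<alpha> i - x i - of_int (- \<lfloor>m i\<rfloor>)\<bar> \<le> e"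
    using close by (simp add: floor_m algebra_simps less_imp_le)
  then have "near_lattice n (\<lambda>i. of_int k * \<alpha> i - x i) e"
    unfolding near_lattice_def by (rule exI[where x = "\<lambda>i. - \<lfloor>m i\<rfloor>"])
  then show thesis
    by (rule that)
qed

lemma dense_orbit_small_pos:
  assumes "n \<ge> 1" "dense_orbit n \<alpha>" "0 < d" "d \<le> 1"
  obtains k :: int where "k > 0" "near_lattice n (\<lambda>i. of_int k * \<alpha> i) d"
proof -
  obtain k where k: "near_lattice n (\<lambda>i. of_int k * \<alpha> i - d / 2) (d / 4)"
    using dense_orbit_approx[OF assms(2), of "d / 4" "\<lambda>_. d / 2"] \<open>d > 0\<close> by auto
  have "k \<noteq> 0"
  proof
    assume "k = 0"
    then obtain m :: int where "\<bar>- d / 2 - of_int m\<bar> \<le> d / 4"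
      using k \<open>n \<ge> 1\<close> unfolding near_lattice_def by force
    moreover have "of_int m \<ge> (0::real) \<or> of_int m \<le> (-1::real)"
      by (cases "m \<ge> 0") auto
    ultimately show False
      using \<open>0 < d\<close> \<open>d \<le> 1\<close> by (auto simp: abs_le_iff)
  qed
  have "near_lattice n (\<lambda>i. (of_int k * \<alpha> i - d / 2) + d / 2) (d / 4 + d / 2)"
    by (intro near_lattice_add[OF k] near_lattice_if_abs_le) (use \<open>d > 0\<close> in auto)
  then have near_k: "near_lattice n (\<lambda>i. of_int k * \<alpha> i) d"
    by (rule near_lattice_mono[OF near_lattice_cong]) (use \<open>d > 0\<close> in auto)
  then have "near_lattice n (\<lambda>i. of_int \<bar>k\<bar> * \<alpha> i) d"
    using near_lattice_scale[OF near_k, of "-1"] by (cases "k \<ge> 0") auto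
  with \<open>k \<noteq> 0\<close> show thesis
    by (intro that[of "\<bar>k\<bar>"]) auto
qed

text \<open>The factor 1 + |S i| keeps each increment small even after multiplication by an earlier
S j; see the second claim of the telescoping lemma.\<close>

lemma dense_orbit_sparse_sequence:
  assumes "n \<ge> 1" "dense_orbit n \<alpha>" "0 < c" "c \<le> 1"
  obtains S :: "nat \<Rightarrow> int" where "S 0 = 0" "strict_mono S"
    "\<And>i. near_lattice n (\<lambda>j. of_int (S (Suc i) - S i) * \<alpha> j) (c / (2 ^ Suc i * (1 + \<bar>of_int (S i)\<bar>)))"
proof -
  have "c / (2 ^ Suc i * (1 + \<bar>of_int s\<bar>)) \<le> 1" for i and s :: int
  proof -
    have "(1::real) \<le> 2 ^ Suc i * (1 + \<bar>of_int s\<bar>)"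
      using mult_mono[OF one_le_power[of "2::real" "Suc i"], of 1 "1 + \<bar>of_int s\<bar>"] by simp
    then show ?thesis
      using \<open>0 < c\<close> \<open>c \<le> 1\<close> by (simp add: divide_le_eq)
  qed
  moreover have "0 < c / (2 ^ Suc i * (1 + \<bar>of_int s\<bar>))" for i and s :: int
    using \<open>0 < c\<close> by (simp add: add_pos_nonneg)
  ultimately have "\<exists>k>0. near_lattice n (\<lambda>j. of_int k * \<alpha> j) (c / (2 ^ Suc i * (1 + \<bar>of_int s\<bar>)))"
    for i and s :: int
    by (metis dense_orbit_small_pos[OF assms(1,2)])
  then have "\<exists>f. \<forall>i s. f i s > 0 \<and>
      near_lattice n (\<lambda>j. of_int (f i s) * \<alpha> j) (c / (2 ^ Suc i * (1 + \<bar>of_int s\<bar>)))"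
    by (subst choice_iff[symmetric], intro allI, subst choice_iff[symmetric]) blast
  then obtain f where f_pos: "\<And>i s. f i s > 0"
    and f_near: "\<And>i s. near_lattice n (\<lambda>j. of_int (f i s) * \<alpha> j) (c / (2 ^ Suc i * (1 + \<bar>of_int s\<bar>)))"
    by blast
  define S where "S = rec_nat 0 (\<lambda>i s. s + f i s)"
  have S_Suc: "S (Suc i) = S i + f i (S i)" for i
    by (simp add: S_def)
  show thesis
  proof (rule that)
    show "S 0 = 0"
      by (simp add: S_def)
    show "strict_mono S"
      unfolding strict_mono_Suc_iff by (simp add: S_Suc f_pos)
    show "near_lattice n (\<lambda>j. of_int (S (Suc i) - S i) * \<alpha> j) (c / (2 ^ Suc i * (1 + \<bar>of_int (S i)\<bar>)))"
      for i
      using f_near[of i "S i"] by (simp add: S_Suc)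
  qed
qed

lemma near_lattice_telescope:
  assumes "mono S" "0 \<le> S 0" "0 \<le> c"
    and steps: "\<And>i. near_lattice n (\<lambda>j. of_int (S (Suc i) - S i) * \<alpha> j)
      (c / (2 ^ Suc i * (1 + \<bar>of_int (S i)\<bar>)))"
    and "j \<le> m"
  shows "near_lattice n (\<lambda>i. of_int (S m - S j) * \<alpha> i) (c * (1 - 1 / 2 ^ m))"
    and "near_lattice n (\<lambda>i. of_int (S j * (S m - S j)) * \<alpha> i) (c * (1 - 1 / 2 ^ m))"
proof -
  have step_scaled: "near_lattice n (\<lambda>j. of_int t * (of_int (S (Suc i) - S i) * \<alpha> j)) (c / 2 ^ Suc i)"
    if "\<bar>of_int t\<bar> \<le> 1 + \<bar>of_int (S i) :: real\<bar>" for i t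
  proof (rule near_lattice_mono[OF near_lattice_scale[OF steps]])
    have "\<bar>of_int t\<bar> * (c / (2 ^ Suc i * (1 + \<bar>of_int (S i)\<bar>)))
        = c / 2 ^ Suc i * (\<bar>of_int t\<bar> / (1 + \<bar>of_int (S i)\<bar>))"
      by simp
    also have "\<dots> \<le> c / 2 ^ Suc i * 1"
      using that \<open>0 \<le> c\<close> by (intro mult_left_mono) (simp_all add: add_pos_nonneg)
    finally show "\<bar>of_int t\<bar> * (c / (2 ^ Suc i * (1 + \<bar>of_int (S i)\<bar>))) \<le> c / 2 ^ Suc i"
      by simp
  qed
  have "near_lattice n (\<lambda>i. of_int (S m - S j) * \<alpha> i) (c * (1 - 1 / 2 ^ m)) \<and>
      near_lattice n (\<lambda>i. of_int (S j * (S m - S j)) * \<alpha> i) (c * (1 - 1 / 2 ^ m))"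
    using \<open>j \<le> m\<close>
  proof (induction m rule: dec_induct)
    case base
    show ?case
      using \<open>0 \<le> c\<close> by (auto intro!: near_lattice_if_abs_le)
  next
    case (step m)
    have geometric: "c * (1 - 1 / 2 ^ m) + c / 2 ^ Suc m = c * (1 - 1 / 2 ^ Suc m)"
      by (simp add: field_simps)
    have "0 \<le> S j" "S j \<le> S m"
      using \<open>0 \<le> S 0\<close> monoD[OF \<open>mono S\<close>, of 0 j] monoD[OF \<open>mono S\<close> step(1)] by simp_all
    then have "\<bar>of_int (S j)\<bar> \<le> 1 + \<bar>of_int (S m) :: real\<bar>"
      by simp
    from near_lattice_add[OF step.IH[THEN conjunct2] step_scaled[OF this]]
    have "near_lattice n (\<lambda>i. of_int (S j * (S (Suc m) - S j)) * \<alpha> i) (c * (1 - 1 / 2 ^ Suc m))"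
      unfolding geometric by (rule near_lattice_cong) (simp add: algebra_simps)
    moreover
    from near_lattice_add[OF step.IH[THEN conjunct1] step_scaled[of 1 m]]
    have "near_lattice n (\<lambda>i. of_int (S (Suc m) - S j) * \<alpha> i) (c * (1 - 1 / 2 ^ Suc m))"
      unfolding geometric by (rule near_lattice_cong) (simp_all add: algebra_simps)
    ultimately show ?case
      by blast
  qed
  then show "near_lattice n (\<lambda>i. of_int (S m - S j) * \<alpha> i) (c * (1 - 1 / 2 ^ m))"
    and "near_lattice n (\<lambda>i. of_int (S j * (S m - S j)) * \<alpha> i) (c * (1 - 1 / 2 ^ m))"
    by blast+
qed

lemma dense_orbit_square_small:
  assumes "n \<ge> 1" "dense_orbit n \<alpha>" "\<delta> > 0"
  obtains q :: int where "q \<noteq> 0" "near_lattice n (\<lambda>i. of_int q * \<alpha> i) \<delta>"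
    "near_lattice n (\<lambda>i. of_int (q\<^sup>2) * \<alpha> i) \<delta>"
proof -
  define c where "c = min (\<delta> / 3) 1"
  have "0 < c" "c \<le> 1" "c \<le> \<delta>" "3 * c \<le> \<delta>"
    using \<open>\<delta> > 0\<close> by (auto simp: c_def)
  obtain S where "S 0 = 0" "strict_mono S"
    and steps: "\<And>i. near_lattice n (\<lambda>j. of_int (S (Suc i) - S i) * \<alpha> j)
      (c / (2 ^ Suc i * (1 + \<bar>of_int (S i)\<bar>)))"
    using dense_orbit_sparse_sequence[OF assms(1,2) \<open>0 < c\<close> \<open>c \<le> 1\<close>] by metis
  obtain j l where "j < l"
    and squares: "near_lattice n (\<lambda>i. of_int (S l ^ 2) * \<alpha> i - of_int (S j ^ 2) * \<alpha> i) c"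
    by (rule near_lattice_pigeonhole[OF \<open>c > 0\<close>, of n "\<lambda>j i. of_int (S j ^ 2) * \<alpha> i"])
  define q where "q = S l - S j"
  have "q \<noteq> 0"
    using strict_monoD[OF \<open>strict_mono S\<close> \<open>j < l\<close>] by (simp add: q_def)
  note telescope = near_lattice_telescope[OF strict_mono_mono[OF \<open>strict_mono S\<close>] _ _ steps,
      of j l, unfolded \<open>S 0 = 0\<close> q_def[symmetric]]
  have "c * (1 - 1 / 2 ^ l) \<le> c"
    using \<open>c > 0\<close> by simp
  then have near_q: "near_lattice n (\<lambda>i. of_int q * \<alpha> i) c"
    and near_Sj_q: "near_lattice n (\<lambda>i. of_int (S j * q) * \<alpha> i) c"
    using telescope \<open>j < l\<close> \<open>0 < c\<close> by (auto intro: near_lattice_mono)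
  have "q\<^sup>2 = (S l ^ 2 - S j ^ 2) - 2 * (S j * q)"
    by (simp add: q_def power2_eq_square algebra_simps)
  then have q2: "(of_int (q\<^sup>2) :: real) = of_int (S l ^ 2) - of_int (S j ^ 2) - 2 * of_int (S j * q)"
    by simp
  from near_lattice_add[OF squares near_lattice_scale[OF near_Sj_q, of "-2"]]
  have near_q2: "near_lattice n (\<lambda>i. of_int (q\<^sup>2) * \<alpha> i) (3 * c)"
    by (rule near_lattice_mono[OF near_lattice_cong]) (unfold q2, simp_all add: algebra_simps)
  show thesis
    using that[OF \<open>q \<noteq> 0\<close> near_lattice_mono[OF near_q \<open>c \<le> \<delta>\<close>]
        near_lattice_mono[OF near_q2 \<open>3 * c \<le> \<delta>\<close>]] .
qed

lemma near_lattice_square_shift: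
  fixes \<alpha> \<gamma> \<theta> :: "nat \<Rightarrow> real" and q s :: int and t :: nat
  assumes "q \<noteq> 0"
    and near_q: "near_lattice n (\<lambda>i. of_int q * \<alpha> i) \<delta>"
    and near_q2: "near_lattice n (\<lambda>i. of_int (q\<^sup>2) * \<alpha> i) \<delta>"
    and near_s: "near_lattice n (\<lambda>i. of_int s * \<alpha> i - \<gamma> i / (2 * of_int q)) \<eta>"
    and near_\<gamma>: "near_lattice n (\<lambda>i. \<gamma> i / (2 * of_int q)) r"
    and near_t: "near_lattice n (\<lambda>i. of_nat t * \<gamma> i - (\<theta> i - of_int (s\<^sup>2) * \<alpha> i)) r'"
  shows "near_lattice n (\<lambda>i. of_int (s + int t * q) * \<alpha> i) (\<eta> + r + of_nat t * \<delta>)"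
    and "near_lattice n (\<lambda>i. of_int ((s + int t * q)\<^sup>2) * \<alpha> i - \<theta> i)
      (r' + 2 * \<bar>of_int q\<bar> * of_nat t * \<eta> + of_nat t ^ 2 * \<delta>)"
proof -
  from near_lattice_add[OF near_lattice_add[OF near_s near_\<gamma>] near_lattice_scale[OF near_q, of "int t"]]
  show "near_lattice n (\<lambda>i. of_int (s + int t * q) * \<alpha> i) (\<eta> + r + of_nat t * \<delta>)"
    by (rule near_lattice_mono[OF near_lattice_cong]) (simp_all add: algebra_simps)
  from near_lattice_add[OF near_lattice_add[OF near_t near_lattice_scale[OF near_s, of "2 * q * int t"]]
      near_lattice_scale[OF near_q2, of "int t ^ 2"]]
  show "near_lattice n (\<lambda>i. of_int ((s + int t * q)\<^sup>2) * \<alpha> i - \<theta> i)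
      (r' + 2 * \<bar>of_int q\<bar> * of_nat t * \<eta> + of_nat t ^ 2 * \<delta>)"
    by (rule near_lattice_mono[OF near_lattice_cong])
      (use \<open>q \<noteq> 0\<close> in \<open>simp_all add: power2_eq_square field_simps abs_mult\<close>)
qed

lemma dense_orbit_square_approx:
  assumes "n \<ge> 1" "dense_orbit n \<alpha>" "\<epsilon> > 0"
  obtains k :: int where "near_lattice n (\<lambda>i. of_int k * \<alpha> i) \<epsilon>"
    "near_lattice n (\<lambda>i. of_int (k\<^sup>2) * \<alpha> i - \<theta> i) \<epsilon>"
proof -
  define M :: nat where "M = nat \<lceil>4 / \<epsilon>\<rceil> + 1"
  have "M \<ge> 1"
    by (simp add: M_def)
  have "4 / \<epsilon> \<le> of_nat M"
    unfolding M_def by linarith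
  then have M_eps: "1 / of_nat M \<le> \<epsilon> / 4"
    using \<open>\<epsilon> > 0\<close> \<open>M \<ge> 1\<close> by (simp add: field_simps)
  define T :: real where "T = of_nat M ^ n"
  have "T \<ge> 1"
    using \<open>M \<ge> 1\<close> by (simp add: T_def)
  define \<delta> where "\<delta> = \<epsilon> / (4 * T\<^sup>2)"
  have "\<delta> > 0"
    using \<open>\<epsilon> > 0\<close> \<open>T \<ge> 1\<close> by (simp add: \<delta>_def)
  then obtain q where "q \<noteq> 0" and near_q: "near_lattice n (\<lambda>i. of_int q * \<alpha> i) \<delta>"
    and near_q2: "near_lattice n (\<lambda>i. of_int (q\<^sup>2) * \<alpha> i) \<delta>"
    by (rule dense_orbit_square_small[OF assms(1,2)])
  define \<gamma> :: "nat \<Rightarrow> real" where "\<gamma> i = 1 / of_nat M ^ Suc i" for i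
  define \<eta> where "\<eta> = \<epsilon> / (8 * \<bar>of_int q\<bar> * T)"
  have "\<eta> > 0"
    using \<open>\<epsilon> > 0\<close> \<open>T \<ge> 1\<close> \<open>q \<noteq> 0\<close> by (simp add: \<eta>_def)
  then obtain s where near_s: "near_lattice n (\<lambda>i. of_int s * \<alpha> i - \<gamma> i / (2 * of_int q)) \<eta>"
    by (rule dense_orbit_approx[OF assms(2)])
  obtain t where "t < M ^ n"
    and near_t: "near_lattice n (\<lambda>i. of_nat t / of_nat M ^ Suc i - (\<theta> i - of_int (s\<^sup>2) * \<alpha> i))
      (1 / of_nat M)"
    using radix_fraction_approx[OF \<open>M \<ge> 1\<close>, of n "\<lambda>i. \<theta> i - of_int (s\<^sup>2) * \<alpha> i"] by blast
  have "1 \<le> \<bar>of_int q :: real\<bar>"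
    using \<open>q \<noteq> 0\<close> by linarith
  have "\<bar>\<gamma> i / (2 * of_int q)\<bar> \<le> 1 / of_nat M" for i
  proof -
    have "\<bar>\<gamma> i / (2 * of_int q)\<bar> = \<gamma> i / (2 * \<bar>of_int q\<bar>)"
      by (simp add: \<gamma>_def abs_mult)
    also have "\<dots> \<le> \<gamma> i / 1"
      using \<open>1 \<le> \<bar>of_int q\<bar>\<close> by (intro divide_left_mono) (simp_all add: \<gamma>_def)
    also have "\<dots> \<le> 1 / of_nat M"
      using \<open>M \<ge> 1\<close> by (simp add: \<gamma>_def divide_le_eq field_simps)
    finally show ?thesis .
  qed
  then have near_\<gamma>: "near_lattice n (\<lambda>i. \<gamma> i / (2 * of_int q)) (1 / of_nat M)"
    by (rule near_lattice_if_abs_le)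
  from near_t have "near_lattice n (\<lambda>i. of_nat t * \<gamma> i - (\<theta> i - of_int (s\<^sup>2) * \<alpha> i)) (1 / of_nat M)"
    by (rule near_lattice_cong) (simp add: \<gamma>_def)
  note near_k = near_lattice_square_shift[OF \<open>q \<noteq> 0\<close> near_q near_q2 near_s near_\<gamma> this]
  have "of_nat t \<le> T"
    using \<open>t < M ^ n\<close> unfolding T_def by (metis less_imp_le of_nat_le_iff of_nat_power)
  have "1 \<le> T * \<bar>of_int q\<bar>"
    using mult_mono[OF \<open>1 \<le> T\<close> \<open>1 \<le> \<bar>of_int q\<bar>\<close>] \<open>T \<ge> 1\<close> by simp
  then have "\<eta> \<le> \<epsilon> / 8"
    using \<open>\<epsilon> > 0\<close> unfolding \<eta>_def
    by (simp add: divide_le_eq field_simps mult_mono)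
  have "T\<^sup>2 * \<delta> = \<epsilon> / 4"
    using \<open>T \<ge> 1\<close> by (simp add: \<delta>_def)
  moreover have "T \<le> T\<^sup>2"
    using mult_right_mono[OF \<open>1 \<le> T\<close>, of T] \<open>T \<ge> 1\<close> by (simp add: power2_eq_square)
  then have "of_nat t \<le> T\<^sup>2" "of_nat t ^ 2 \<le> T\<^sup>2"
    using \<open>of_nat t \<le> T\<close> by (simp_all add: power_mono)
  ultimately have "of_nat t * \<delta> \<le> \<epsilon> / 4" "of_nat t ^ 2 * \<delta> \<le> \<epsilon> / 4"
    using \<open>\<delta> > 0\<close> by (metis less_imp_le mult_right_mono)+
  have "2 * \<bar>of_int q\<bar> * T * \<eta> = \<epsilon> / 4"
    using \<open>T \<ge> 1\<close> \<open>q \<noteq> 0\<close> by (simp add: \<eta>_def)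
  then have "2 * \<bar>of_int q\<bar> * of_nat t * \<eta> \<le> \<epsilon> / 4"
    using \<open>of_nat t \<le> T\<close> \<open>\<eta> > 0\<close>
    by (metis abs_ge_zero less_imp_le mult_left_mono mult_right_mono zero_le_mult_iff zero_le_numeral)
  show thesis
  proof (rule that)
    show "near_lattice n (\<lambda>i. of_int (s + int t * q) * \<alpha> i) \<epsilon>"
      by (rule near_lattice_mono[OF near_k(1)])
        (use \<open>\<eta> \<le> \<epsilon> / 8\<close> M_eps \<open>of_nat t * \<delta> \<le> \<epsilon> / 4\<close> \<open>\<epsilon> > 0\<close> in linarith)
    show "near_lattice n (\<lambda>i. of_int ((s + int t * q)\<^sup>2) * \<alpha> i - \<theta> i) \<epsilon>"
      by (rule near_lattice_mono[OF near_k(2)])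
        (use M_eps \<open>2 * \<bar>of_int q\<bar> * of_nat t * \<eta> \<le> \<epsilon> / 4\<close> \<open>of_nat t ^ 2 * \<delta> \<le> \<epsilon> / 4\<close>
          \<open>\<epsilon> > 0\<close> in linarith)
  qed
qed

lemma dense_orbit_xy_minus_square_shift:
  assumes "n \<ge> 1" "dense_orbit n \<alpha>" "\<rho> > 0" "x \<noteq> 0"
    and near_a: "near_lattice n (\<lambda>i. of_int a * \<alpha> i) (\<rho> / 2)"
  obtains y z :: int where "x * y - z\<^sup>2 = x - a\<^sup>2"
    "near_lattice n (\<lambda>i. of_int y * \<alpha> i) \<rho>" "near_lattice n (\<lambda>i. of_int z * \<alpha> i) \<rho>"
proof -
  define D :: real where "D = \<bar>of_int x\<bar> + 2 * \<bar>of_int a\<bar> + 1"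
  have "D > 0"
    by (simp add: D_def add_nonneg_pos)
  define \<eta> where "\<eta> = \<rho> / (2 * D)"
  have "\<eta> > 0"
    using \<open>\<rho> > 0\<close> \<open>D > 0\<close> by (simp add: \<eta>_def)
  have "D * \<eta> = \<rho> / 2"
    using \<open>D > 0\<close> by (simp add: \<eta>_def)
  then have bound: "\<bar>of_int x\<bar> * \<eta> + 2 * \<bar>of_int a\<bar> * \<eta> \<le> \<rho> / 2"
    using \<open>\<eta> > 0\<close> by (simp add: D_def distrib_right)
  obtain d where near_d: "near_lattice n (\<lambda>i. of_int d * \<alpha> i) \<eta>"
    and near_d2: "near_lattice n (\<lambda>i. of_int (d\<^sup>2) * \<alpha> i - - \<alpha> i / of_int x) \<eta>"
    by (rule dense_orbit_square_approx[OF assms(1,2) \<open>\<eta> > 0\<close>])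
  define y where "y = d\<^sup>2 * x - 2 * a * d + 1"
  define z where "z = d * x - a"
  from near_lattice_add[OF near_lattice_scale[OF near_d2, of x] near_lattice_scale[OF near_d, of "-2 * a"]]
  have near_y: "near_lattice n (\<lambda>i. of_int y * \<alpha> i) \<rho>"
  proof (rule near_lattice_mono[OF near_lattice_cong])
    fix i
    show "of_int y * \<alpha> i = of_int x * (of_int (d\<^sup>2) * \<alpha> i - - \<alpha> i / of_int x)
        + of_int (-2 * a) * (of_int d * \<alpha> i)"
      using \<open>x \<noteq> 0\<close> by (simp add: y_def field_simps)
    show "\<bar>of_int x\<bar> * \<eta> + \<bar>of_int (-2 * a)\<bar> * \<eta> \<le> \<rho>"
      using bound \<open>\<rho> > 0\<close> by (simp add: abs_mult)
  qed
  from near_lattice_diff[OF near_lattice_scale[OF near_d, of x] near_a]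
  have near_z: "near_lattice n (\<lambda>i. of_int z * \<alpha> i) \<rho>"
  proof (rule near_lattice_mono[OF near_lattice_cong])
    fix i
    show "of_int z * \<alpha> i = of_int x * (of_int d * \<alpha> i) - of_int a * \<alpha> i"
      by (simp add: z_def algebra_simps)
    have "0 \<le> \<bar>of_int a\<bar> * \<eta>"
      using \<open>\<eta> > 0\<close> by simp
    then show "\<bar>of_int x\<bar> * \<eta> + \<rho> / 2 \<le> \<rho>"
      using bound by linarith
  qed
  have "x * y - z\<^sup>2 = x - a\<^sup>2"
    by (simp add: y_def z_def power2_eq_square algebra_simps)
  then show thesis
    using near_y near_z by (rule that)
qed

lemma dense_orbit_xy_minus_square:
  assumes "n \<ge> 1" "dense_orbit n \<alpha>" "\<rho> > 0"
  obtains x y z :: int where "N = x * y - z\<^sup>2" "near_lattice n (\<lambda>i. of_int x * \<alpha> i) \<rho>"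
    "near_lattice n (\<lambda>i. of_int y * \<alpha> i) \<rho>" "near_lattice n (\<lambda>i. of_int z * \<alpha> i) \<rho>"
proof -
  have "\<rho> / 2 > 0"
    using \<open>\<rho> > 0\<close> by simp
  then obtain a where near_a: "near_lattice n (\<lambda>i. of_int a * \<alpha> i) (\<rho> / 2)"
    and near_a2: "near_lattice n (\<lambda>i. of_int (a\<^sup>2) * \<alpha> i - - of_int N * \<alpha> i) (\<rho> / 2)"
    by (rule dense_orbit_square_approx[OF assms(1,2)])
  define x where "x = a\<^sup>2 + N"
  from near_a2 have near_x: "near_lattice n (\<lambda>i. of_int x * \<alpha> i) \<rho>"
    by (rule near_lattice_mono[OF near_lattice_cong]) (use \<open>\<rho> > 0\<close> in \<open>simp_all add: x_def algebra_simps\<close>)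
  show thesis
  proof (cases "x = 0")
    case True
    then have "N = x * x - a\<^sup>2"
      by (simp add: x_def)
    moreover have "near_lattice n (\<lambda>i. of_int a * \<alpha> i) \<rho>"
      using near_lattice_mono[OF near_a] \<open>\<rho> > 0\<close> by simp
    ultimately show thesis
      using that[of x x a] near_x by blast
  next
    case False
    obtain y z where "x * y - z\<^sup>2 = x - a\<^sup>2"
      and near_y: "near_lattice n (\<lambda>i. of_int y * \<alpha> i) \<rho>"
      and near_z: "near_lattice n (\<lambda>i. of_int z * \<alpha> i) \<rho>"
      by (rule dense_orbit_xy_minus_square_shift[OF assms False near_a])
    then have "N = x * y - z\<^sup>2"
      by (simp add: x_def)
    then show thesis
      using near_x near_y near_z by (rule that)
  qed
qed

theorem corollary1p2:
  fixes B :: "int set"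
  assumes "bohr_zero_nonperiodic B"
  shows "{x * y - z ^ 2 | x y z. x \<in> B \<and> y \<in> B \<and> z \<in> B} = (UNIV :: int set)"
proof -
  obtain n \<alpha> V where "n \<ge> 1" "dense_orbit n \<alpha>" "torus_open n V" "(\<lambda>i. 0) \<in> V"
    and B: "B = {k. (\<lambda>i. of_int k * \<alpha> i) \<in> V}"
    using assms unfolding bohr_zero_nonperiodic_def by blast
  obtain \<rho> where "\<rho> > 0" and in_V: "\<And>v. near_lattice n v \<rho> \<Longrightarrow> v \<in> V"
    using torus_open_zero_neighbourhood[OF \<open>torus_open n V\<close> \<open>(\<lambda>i. 0) \<in> V\<close>] by blast
  have "N \<in> {x * y - z ^ 2 | x y z. x \<in> B \<and> y \<in> B \<and> z \<in> B}" for N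
  proof -
    obtain x y z where "N = x * y - z\<^sup>2" and "near_lattice n (\<lambda>i. of_int x * \<alpha> i) \<rho>"
      "near_lattice n (\<lambda>i. of_int y * \<alpha> i) \<rho>" "near_lattice n (\<lambda>i. of_int z * \<alpha> i) \<rho>"
      by (rule dense_orbit_xy_minus_square[OF \<open>n \<ge> 1\<close> \<open>dense_orbit n \<alpha>\<close> \<open>\<rho> > 0\<close>])
    then have "x \<in> B" "y \<in> B" "z \<in> B"
      unfolding B by (simp_all add: in_V)
    with \<open>N = x * y - z\<^sup>2\<close> show ?thesis
      by blast
  qed
  then show ?thesis
    by blast
qed

end
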